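(* Let $X\in\mathbb{Z}^{n\times m}$ with $n\le m$ be a random matrix with independent entries that are sub-Poisson with variance proxy $\sigma^2$ and satisfy $\mathbb{E}|X_{ij}|\le\sigma^2$. Let $M_{ij}=\mathbb{I}(i\ne j)$ and, for $t\ge 0$, $$\xi_i=\mathbb{I}\Big(\|((|X||X|^\top)\odot M)_{i:}\|_1\le(4+5t)\,nm\sigma^4\Big),\quad i\in[n].$$ If $8\log(en)\le m\sigma^2$ and $6e^2n\sigma^2\le1$, then $$\Pr\Big(\frac1n\sum_{i=1}^n\xi_i\le1-s\Big)\le\frac1s\Big(\sqrt t\exp\Big(-\frac{\sqrt t\,nm\sigma^4}{10\sqrt6}\Big)+3n^{-\sqrt t/(2\sqrt6)}\Big)$$ for all $s>0$ and all $t\ge6\vee\frac{96\log^2m}{\log^2(1/(6en\sigma^2))}$.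
   Context: A real random variable $Y$ is sub-Poisson with variance proxy $\sigma^2\ge0$ if $\mathbb{E}e^{\lambda(Y-\mathbb{E}Y)}\le\exp\{\sigma^2(e^{|\lambda|}-1-|\lambda|)\}$ for all $\lambda\in\mathbb{R}$. $|X|$ is the entrywise absolute value, $\odot$ the entrywise product, $\|\cdot\|_1$ the $\ell_1$ norm of a row, $\vee=\max$. *)

theory Defs
  imports "HOL-Probability.Probability"
begin

text \<open>Sub-Poisson random variable with variance proxy sigma2 (sigma2 = sigma squared).
  Expectations are Bochner integrals, so integrability is required explicitly.\<close>
definition sub_poisson :: "'a measure \<Rightarrow> ('a \<Rightarrow> real) \<Rightarrow> real \<Rightarrow> bool" where
  "sub_poisson M Y sigma2 \<longleftrightarrow> sigma2 \<ge> 0 \<and> integrable M Y \<and>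
     (\<forall>l::real. integrable M (\<lambda>x. exp (l * (Y x - integral\<^sup>L M Y))) \<and>
        integral\<^sup>L M (\<lambda>x. exp (l * (Y x - integral\<^sup>L M Y)))
          \<le> exp (sigma2 * (exp \<bar>l\<bar> - 1 - \<bar>l\<bar>)))"

text \<open>l1 norm of row i of ((|X| |X|^T) odot M) with M_ik = [i \<noteq> k], for an n x m matrix.\<close>
definition offdiag_row_norm :: "nat \<Rightarrow> nat \<Rightarrow> (nat \<Rightarrow> nat \<Rightarrow> real) \<Rightarrow> nat \<Rightarrow> real" where
  "offdiag_row_norm n m A i =
     (\<Sum>k\<in>{0..<n} - {i}. \<bar>\<Sum>j<m. \<bar>A i j\<bar> * \<bar>A k j\<bar>\<bar>)"

end

theory Submission
  imports Defs
begin

text \<open>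
  Row i can only be heavy if some entry satisfies K < |X i j|, where K = sqrt t / (2 sqrt 6), or if
  the product over the columns j of the weights exp (min |X i j| K * S j / K), with S j the sum of
  |X k j| over k distinct from i, exceeds exp (a / K) for the threshold a. Sub-Poisson entries
  satisfy E exp (l |Y|) <= exp (3 sigma2 (e^l - 1)), so a union bound over Chernoff tails with
  e^l = 1 / (6 e sigma2) handles the first event. The weights are independent across columns, and
  convexity of exp together with independence within a column bounds the mean of each weight by
  1 + sigma2 / K * (exp (3 (e - 1) n sigma2) - 1); Markov's inequality for their product handles
  the second event. Finally, Markov's inequality for the number of heavy rows turns the bound for
  a single row into the bound for their fraction.
\<close>

lemma exp_mult_abs_le:
  fixes l y :: real assumes "0 \<le> l"
  shows "exp (l * \<bar>y\<bar>) \<le> exp (l * y) + exp (- (l * y)) - 1 + l * \<bar>y\<bar>"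
proof -
  have "exp (l * \<bar>y\<bar>) + exp (- (l * \<bar>y\<bar>)) = exp (l * y) + exp (- (l * y))"
    by (cases "y \<ge> 0") auto
  moreover have "1 - l * \<bar>y\<bar> \<le> exp (- (l * \<bar>y\<bar>))"
    using exp_ge_add_one_self[of "- (l * \<bar>y\<bar>)"] by simp
  ultimately show ?thesis by linarith
qed

lemma two_exp_add_le_exp_three_mult:
  fixes c d :: real assumes "0 \<le> d" "d \<le> c"
  shows "2 * exp c - 1 + d \<le> exp (3 * c)"
proof -
  have "2 * exp c - 1 \<le> exp c * exp c"
    using zero_le_square[of "exp c - 1"] by (simp add: algebra_simps power2_eq_square)
  moreover have "d \<le> exp c * exp c * c"
  proof -
    have "1 \<le> exp c" using assms by simp
    then have "1 \<le> exp c * exp c" using mult_mono[of 1 "exp c" 1 "exp c"] by simp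
    then show ?thesis using assms mult_right_mono[of 1 "exp c * exp c" c] by simp
  qed
  moreover have "exp c * exp c * (1 + c) \<le> exp c * exp c * exp c"
    using exp_ge_add_one_self[of c] by (intro mult_left_mono) auto
  ultimately show ?thesis by (simp add: exp_add[symmetric] algebra_simps)
qed

lemma exp_mult_le_convex:
  fixes u s :: real assumes "0 \<le> u" "u \<le> 1"
  shows "exp (u * s) \<le> 1 + u * (exp s - 1)"
  using convex_onD[OF exp_convex, of u 0 s] assms by (simp add: algebra_simps)

lemma entry_tail_bound_le:
  fixes v K :: real and n m :: nat
  assumes v: "0 < v" and n: "1 \<le> n" and m: "1 \<le> m"
    and small: "6 * exp 1 * n * v \<le> 1" and lnm: "ln m \<le> K * ln (1 / (6 * exp 1 * n * v))"
  defines "l \<equiv> ln (1 / (6 * exp 1 * v))"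
  shows "0 \<le> l" and "m * (exp (3 * v * (exp l - 1)) / exp (l * K)) \<le> 3 * n powr (- K)"
proof -
  have "6 * exp 1 * v \<le> 6 * exp 1 * n * v"
    using n v by (simp add: mult_right_mono)
  then have "6 * exp 1 * v \<le> 1"
    using small by linarith
  then show l: "0 \<le> l"
    using v unfolding l_def by (simp add: field_simps)
  have exp_l: "exp l = 1 / (6 * exp 1 * v)"
    using v unfolding l_def by simp
  have "3 * v * (exp l - 1) \<le> 3 * v * exp l"
    using v by simp
  also have "\<dots> = 1 / (2 * exp 1)"
    using v unfolding exp_l by simp
  also have "\<dots> \<le> 1"
    using exp_ge_add_one_self[of 1] by simp
  finally have "exp (3 * v * (exp l - 1)) \<le> 3"
    using order_trans[OF _ exp_le] by simp
  moreover have "m / exp (l * K) \<le> n powr (- K)"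
  proof -
    have L: "ln (1 / (6 * exp 1 * n * v)) = l - ln n"
      using n v unfolding l_def by (simp add: ln_div ln_mult)
    have "ln m \<le> l * K - K * ln n"
      using lnm[unfolded L] by (simp add: algebra_simps)
    then have "m \<le> exp (l * K - K * ln n)"
      using m by (metis exp_le_cancel_iff exp_ln of_nat_0_less_iff less_le_trans zero_less_one)
    then have "m / exp (l * K) \<le> exp (l * K - K * ln n) / exp (l * K)"
      by (rule divide_right_mono) simp
    also have "\<dots> = n powr (- K)"
      using n by (simp add: exp_diff powr_def exp_minus field_simps)
    finally show ?thesis .
  qed
  ultimately have "exp (3 * v * (exp l - 1)) * (m / exp (l * K)) \<le> 3 * n powr (- K)"
    by (rule mult_mono) auto
  then show "m * (exp (3 * v * (exp l - 1)) / exp (l * K)) \<le> 3 * n powr (- K)"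
    by (simp add: ac_simps)
qed

lemma column_exponent_le:
  fixes v t :: real and n m :: nat
  assumes v: "0 \<le> v" and small: "6 * (exp 1)\<^sup>2 * n * v \<le> 1" and t: "6 \<le> t"
  shows "(m * v * (exp (3 * (exp 1 - 1) * n * v) - 1) - (4 + 5 * t) * n * m * v\<^sup>2) / (sqrt t / (2 * sqrt 6))
         \<le> - (sqrt t * n * m * v\<^sup>2 / (10 * sqrt 6))"
proof -
  define c where "c = 3 * (exp 1 - 1) * n * v"
  define B where "B = n * m * v\<^sup>2"
  define r where "r = sqrt t"
  define q where "q = sqrt (6 :: real)"
  have B: "0 \<le> B" and r: "0 < r" "r * r = t" and q: "0 < q" "q * q = 6"
    using t unfolding B_def r_def q_def by auto
  have c: "0 \<le> c" using v unfolding c_def by simp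
  have "exp 1 \<le> exp (2 :: real)" by simp
  also have "\<dots> = (exp 1)\<^sup>2" using exp_double[of "1 :: real"] by simp
  finally have "c \<le> 3 * (exp 1)\<^sup>2 * n * v"
    using v unfolding c_def by (simp add: mult_right_mono)
  then have "exp c - 1 \<le> 2 * c"
    using exp_bound_lemma[of c] c small by simp
  then have "m * v * (exp c - 1) \<le> m * v * (2 * c)"
    using v by (intro mult_left_mono) auto
  also have "\<dots> = 6 * (exp 1 - 1) * B"
    unfolding c_def B_def by (simp add: power2_eq_square algebra_simps)
  also have "\<dots> \<le> 12 * B"
    using exp_le B by (simp add: mult_right_mono)
  finally have num: "m * v * (exp c - 1) - (4 + 5 * t) * B \<le> (8 - 5 * t) * B"
    by (simp add: algebra_simps)
  have "(8 - 5 * t) * (2 * q) * (10 * q) = (8 - 5 * t) * 20 * (q * q)"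
    by (simp add: algebra_simps)
  also have "\<dots> \<le> - (r * r)"
    using q r t by simp
  finally have "(8 - 5 * t) * (2 * q) * (10 * q) \<le> - (r * r)" .
  then have "(8 - 5 * t) * (2 * q) / r \<le> - (r / (10 * q))"
    using q r by (simp add: field_simps)
  from mult_right_mono[OF this B]
  have "(8 - 5 * t) * B * (2 * q) / r \<le> - (r * B / (10 * q))"
    by (simp add: algebra_simps)
  moreover have "(m * v * (exp c - 1) - (4 + 5 * t) * B) / (r / (2 * q)) \<le> (8 - 5 * t) * B * (2 * q) / r"
    using divide_right_mono[OF num, of "r / (2 * q)"] q r by simp
  ultimately show ?thesis
    unfolding c_def B_def r_def q_def by (simp add: mult.assoc)
qed

lemma le_of_sq_ratio_le:
  fixes x L t :: real
  assumes L: "0 < L" and ratio: "96 * x\<^sup>2 / L\<^sup>2 \<le> t"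
  shows "x \<le> sqrt t / (2 * sqrt 6) * L"
proof -
  have "0 \<le> 96 * x\<^sup>2 / L\<^sup>2" by simp
  then have t: "0 \<le> t" using ratio by linarith
  have "(2 * sqrt 6 * x)\<^sup>2 \<le> 96 * x\<^sup>2"
    by (simp add: power_mult_distrib)
  also have "\<dots> \<le> (sqrt t * L)\<^sup>2"
    using ratio L t by (simp add: pos_divide_le_eq power_mult_distrib)
  finally have "2 * sqrt 6 * x \<le> sqrt t * L"
    by (rule power2_le_imp_le) (use L t in auto)
  then show ?thesis by (simp add: field_simps)
qed

context prob_space
begin

lemma sub_poisson_mgf_le:
  assumes sp: "sub_poisson M Y v" and mean: "\<bar>expectation Y\<bar> \<le> v"
  shows "integrable M (\<lambda>x. exp (l * Y x))"
    and "expectation (\<lambda>x. exp (l * Y x)) \<le> exp (v * (exp \<bar>l\<bar> - 1))"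
proof -
  let ?E = "expectation Y"
  have int: "integrable M (\<lambda>x. exp (l * (Y x - ?E)))"
    and le: "expectation (\<lambda>x. exp (l * (Y x - ?E))) \<le> exp (v * (exp \<bar>l\<bar> - 1 - \<bar>l\<bar>))"
    using sp unfolding sub_poisson_def by auto
  have eq: "(\<lambda>x. exp (l * Y x)) = (\<lambda>x. exp (l * ?E) * exp (l * (Y x - ?E)))"
    by (simp add: exp_add[symmetric] algebra_simps)
  show "integrable M (\<lambda>x. exp (l * Y x))"
    unfolding eq using int by simp
  have "l * ?E \<le> \<bar>l\<bar> * v"
    using mean by (metis abs_ge_self abs_ge_zero abs_mult mult_left_mono order_trans)
  then have "exp (l * ?E) * exp (v * (exp \<bar>l\<bar> - 1 - \<bar>l\<bar>)) \<le> exp (v * (exp \<bar>l\<bar> - 1))"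
    by (simp add: exp_add[symmetric] algebra_simps)
  moreover have "expectation (\<lambda>x. exp (l * Y x)) \<le> exp (l * ?E) * exp (v * (exp \<bar>l\<bar> - 1 - \<bar>l\<bar>))"
    unfolding eq using le by simp
  ultimately show "expectation (\<lambda>x. exp (l * Y x)) \<le> exp (v * (exp \<bar>l\<bar> - 1))"
    by linarith
qed

lemma sub_poisson_mgf_abs_le:
  assumes sp: "sub_poisson M Y v" and abs_mean: "expectation (\<lambda>x. \<bar>Y x\<bar>) \<le> v" and "0 \<le> l"
  shows "integrable M (\<lambda>x. exp (l * \<bar>Y x\<bar>))"
    and "expectation (\<lambda>x. exp (l * \<bar>Y x\<bar>)) \<le> exp (3 * v * (exp l - 1))"
proof -
  have "integrable M Y" and "0 \<le> v" using sp unfolding sub_poisson_def by auto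
  then have [measurable]: "Y \<in> borel_measurable M" by (simp add: borel_measurable_integrable)
  have mean: "\<bar>expectation Y\<bar> \<le> v"
    using integral_abs_bound[of M Y] abs_mean by linarith
  define c where "c = v * (exp l - 1)"
  note mgf = sub_poisson_mgf_le[OF sp mean]
  have int_bound: "integrable M (\<lambda>x. exp (l * Y x) + exp (- (l * Y x)) - 1 + l * \<bar>Y x\<bar>)"
    using mgf(1)[of l] mgf(1)[of "- l"] \<open>integrable M Y\<close> by simp
  show int: "integrable M (\<lambda>x. exp (l * \<bar>Y x\<bar>))"
    by (rule Bochner_Integration.integrable_bound[OF int_bound])
       (auto intro!: AE_I2 order_trans[OF exp_mult_abs_le[OF \<open>0 \<le> l\<close>]])
  have "l * v \<le> c"
    using mult_right_mono[OF _ \<open>0 \<le> v\<close>, of l "exp l - 1"] exp_ge_add_one_self[of l]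
    unfolding c_def by (simp add: mult.commute)
  have "expectation (\<lambda>x. exp (l * \<bar>Y x\<bar>))
      \<le> expectation (\<lambda>x. exp (l * Y x) + exp (- (l * Y x)) - 1 + l * \<bar>Y x\<bar>)"
    by (rule integral_mono[OF int int_bound]) (rule exp_mult_abs_le[OF \<open>0 \<le> l\<close>])
  also have "\<dots> = expectation (\<lambda>x. exp (l * Y x)) + expectation (\<lambda>x. exp (- (l * Y x))) - 1
                  + l * expectation (\<lambda>x. \<bar>Y x\<bar>)"
    using mgf(1)[of l] mgf(1)[of "- l"] \<open>integrable M Y\<close> by (simp add: prob_space)
  also have "\<dots> \<le> 2 * exp c - 1 + l * v"
    using mgf(2)[of l] mgf(2)[of "- l"] mult_left_mono[OF abs_mean \<open>0 \<le> l\<close>] \<open>0 \<le> l\<close>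
    unfolding c_def by simp
  also have "\<dots> \<le> exp (3 * c)"
    by (rule two_exp_add_le_exp_three_mult) (use \<open>0 \<le> l\<close> \<open>0 \<le> v\<close> \<open>l * v \<le> c\<close> in auto)
  finally show "expectation (\<lambda>x. exp (l * \<bar>Y x\<bar>)) \<le> exp (3 * v * (exp l - 1))"
    by (simp add: c_def mult.assoc)
qed

lemma sub_poisson_abs_tail:
  assumes sp: "sub_poisson M Y v" and abs_mean: "expectation (\<lambda>x. \<bar>Y x\<bar>) \<le> v" and l: "0 \<le> l"
  shows "prob {x\<in>space M. K \<le> \<bar>Y x\<bar>} \<le> exp (3 * v * (exp l - 1)) / exp (l * K)"
proof -
  have [measurable]: "Y \<in> borel_measurable M"
    using sp by (simp add: sub_poisson_def borel_measurable_integrable)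
  note mgf = sub_poisson_mgf_abs_le[OF sp abs_mean l]
  have "prob {x\<in>space M. K \<le> \<bar>Y x\<bar>} \<le> prob {x\<in>space M. exp (l * K) \<le> exp (l * \<bar>Y x\<bar>)}"
    by (rule finite_measure_mono) (auto intro: mult_left_mono[OF _ l])
  also have "\<dots> \<le> expectation (\<lambda>x. exp (l * \<bar>Y x\<bar>)) / exp (l * K)"
    by (rule integral_Markov_inequality_measure[where A="space M"]) (use mgf in auto)
  also have "\<dots> \<le> exp (3 * v * (exp l - 1)) / exp (l * K)"
    by (rule divide_right_mono) (use mgf in auto)
  finally show ?thesis .
qed

lemma indep_sets_reindex:
  assumes inj: "inj_on h I" and ind: "indep_sets F (h ` I)"
  shows "indep_sets (\<lambda>i. F (h i)) I"
proof (rule indep_setsI)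
  show "F (h i) \<subseteq> events" if "i \<in> I" for i
    using ind that unfolding indep_sets_def by auto
next
  fix A J assume J: "J \<noteq> {}" "J \<subseteq> I" "finite J" and A: "\<forall>j\<in>J. A j \<in> F (h j)"
  define B where "B k = A (the_inv_into J h k)" for k
  have injJ: "inj_on h J" using inj J(2) by (rule inj_on_subset)
  have BA: "B (h j) = A j" if "j \<in> J" for j
    unfolding B_def using the_inv_into_f_f[OF injJ that] by simp
  have "prob (\<Inter>k\<in>h ` J. B k) = (\<Prod>k\<in>h ` J. prob (B k))"
    by (rule indep_setsD[OF ind]) (use J A BA in auto)
  then show "prob (\<Inter>j\<in>J. A j) = (\<Prod>j\<in>J. prob (A j))"
    using BA by (simp add: prod.reindex[OF injJ])
qed

lemma indep_vars_reindex:
  assumes "inj_on h I" and "indep_vars M' X (h ` I)"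
  shows "indep_vars (\<lambda>i. M' (h i)) (\<lambda>i. X (h i)) I"
  using assms indep_sets_reindex[OF assms(1),
      of "\<lambda>k. sigma_sets (space M) {X k -` A \<inter> space M | A. A \<in> sets (M' k)}"]
  unfolding indep_vars_def by auto

lemma indep_vars_integral_mult_prod:
  fixes Y :: "'i \<Rightarrow> 'a \<Rightarrow> real" and f g :: "real \<Rightarrow> real"
  assumes ind: "indep_vars (\<lambda>_. borel) Y I" and "finite I" and "i \<in> I"
    and [measurable]: "f \<in> borel_measurable borel" "g \<in> borel_measurable borel"
    and int_f: "integrable M (\<lambda>x. f (Y i x))"
    and int_g: "\<And>k. k \<in> I \<Longrightarrow> integrable M (\<lambda>x. g (Y k x))"
  shows "integrable M (\<lambda>x. f (Y i x) * (\<Prod>k\<in>I - {i}. g (Y k x)))"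
    and "expectation (\<lambda>x. f (Y i x) * (\<Prod>k\<in>I - {i}. g (Y k x)))
         = expectation (\<lambda>x. f (Y i x)) * (\<Prod>k\<in>I - {i}. expectation (\<lambda>x. g (Y k x)))"
proof -
  define F where "F k = (if k = i then f else g)" for k
  have indF: "indep_vars (\<lambda>_. borel) (\<lambda>k x. F k (Y k x)) I"
    by (rule indep_vars_compose2[OF ind]) (simp add: F_def)
  have intF: "integrable M (\<lambda>x. F k (Y k x))" if "k \<in> I" for k
    using int_f int_g[OF that] by (simp add: F_def)
  have split: "(\<Prod>k\<in>I. h k) = h i * (\<Prod>k\<in>I - {i}. h k)" for h :: "'i \<Rightarrow> real"
    using \<open>finite I\<close> \<open>i \<in> I\<close> by (rule prod.remove)
  have prod_rest: "(\<Prod>k\<in>I - {i}. h (F k) k) = (\<Prod>k\<in>I - {i}. h g k)" for h :: "_ \<Rightarrow> 'i \<Rightarrow> real"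
    by (rule prod.cong) (auto simp: F_def)
  have prod_eq: "(\<Prod>k\<in>I. F k (Y k x)) = f (Y i x) * (\<Prod>k\<in>I - {i}. g (Y k x))" for x
    using split[of "\<lambda>k. F k (Y k x)"] prod_rest[of "\<lambda>F k. F (Y k x)"] by (simp add: F_def[of i])
  show "integrable M (\<lambda>x. f (Y i x) * (\<Prod>k\<in>I - {i}. g (Y k x)))"
    using indep_vars_integrable[OF \<open>finite I\<close> indF intF] unfolding prod_eq .
  have "expectation (\<lambda>x. \<Prod>k\<in>I. F k (Y k x)) = (\<Prod>k\<in>I. expectation (\<lambda>x. F k (Y k x)))"
    by (rule indep_vars_lebesgue_integral[OF \<open>finite I\<close> indF intF])
  then show "expectation (\<lambda>x. f (Y i x) * (\<Prod>k\<in>I - {i}. g (Y k x)))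
         = expectation (\<lambda>x. f (Y i x)) * (\<Prod>k\<in>I - {i}. expectation (\<lambda>x. g (Y k x)))"
    using split[of "\<lambda>k. expectation (\<lambda>x. F k (Y k x))"] prod_rest[of "\<lambda>F k. expectation (\<lambda>x. F (Y k x))"]
    unfolding prod_eq by (simp add: F_def[of i])
qed

lemma prob_fraction_le_one_minus:
  assumes n: "1 \<le> n" and s: "0 < s"
    and events: "\<And>i. i < n \<Longrightarrow> {x \<in> space M. \<not> P i x} \<in> events"
    and bound: "\<And>i. i < n \<Longrightarrow> prob {x \<in> space M. \<not> P i x} \<le> p"
  shows "prob {x \<in> space M. 1 / real n * (\<Sum>i<n. if P i x then 1 else 0) \<le> 1 - s} \<le> 1 / s * p"
proof -
  define bad where "bad i = {x \<in> space M. \<not> P i x}" for i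
  define count where "count x = (\<Sum>i<n. indicator (bad i) x :: real)" for x
  have [measurable]: "bad i \<in> events" if "i < n" for i
    using events that unfolding bad_def .
  have int: "integrable M count"
    unfolding count_def
    by (intro Bochner_Integration.integrable_sum integrable_real_indicator) (auto simp: less_top[symmetric])
  have "{x \<in> space M. 1 / real n * (\<Sum>i<n. if P i x then 1 else 0) \<le> 1 - s}
      \<subseteq> {x \<in> space M. real n * s \<le> count x}"
  proof safe
    fix x assume x: "x \<in> space M"
      and le: "1 / real n * (\<Sum>i<n. if P i x then 1 else 0) \<le> 1 - s"
    have "(\<Sum>i<n. if P i x then 1 else 0) + count x = (\<Sum>i<n. (1 :: real))"
      unfolding count_def sum.distrib[symmetric] by (rule sum.cong) (auto simp: bad_def x)
    then show "real n * s \<le> count x"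
      using le n by (simp add: field_simps)
  qed
  then have "prob {x \<in> space M. 1 / real n * (\<Sum>i<n. if P i x then 1 else 0) \<le> 1 - s}
      \<le> prob {x \<in> space M. real n * s \<le> count x}"
    by (intro finite_measure_mono) (auto simp: count_def)
  also have "\<dots> \<le> expectation count / (real n * s)"
    by (rule integral_Markov_inequality_measure[OF int]) (use n s in \<open>auto intro!: AE_I2 sum_nonneg simp: count_def\<close>)
  also have "expectation count = (\<Sum>i<n. prob (bad i))"
    unfolding count_def
    by (subst Bochner_Integration.integral_sum) (auto simp: less_top[symmetric])
  also have "(\<Sum>i<n. prob (bad i)) \<le> real n * p"
    using sum_mono[of "{..<n}" "\<lambda>i. prob (bad i)" "\<lambda>_. p"] bound unfolding bad_def by simp
  finally show ?thesis
    using n s by (simp add: divide_right_mono field_simps)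
qed

end

lemma offdiag_row_norm_cong:
  assumes "i < n" and "\<And>k j. k < n \<Longrightarrow> j < m \<Longrightarrow> A k j = B k j"
  shows "offdiag_row_norm n m A i = offdiag_row_norm n m B i"
  using assms unfolding offdiag_row_norm_def by (auto intro!: sum.cong)

lemma offdiag_row_norm_eq:
  "offdiag_row_norm n m A i = (\<Sum>j<m. \<bar>A i j\<bar> * (\<Sum>k\<in>{0..<n} - {i}. \<bar>A k j\<bar>))"
  unfolding offdiag_row_norm_def
  by (simp add: abs_of_nonneg sum_nonneg sum_distrib_left) (rule sum.swap)

locale sub_poisson_matrix = prob_space +
  fixes X :: "nat \<Rightarrow> nat \<Rightarrow> 'a \<Rightarrow> real" and n m :: nat and v :: real
  assumes indep_entries: "indep_vars (\<lambda>_. borel) (\<lambda>(i, j). X i j) ({0..<n} \<times> {0..<m})"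
    and measurable_entry [measurable]: "\<And>i j. X i j \<in> borel_measurable M"
    and sub_poisson_entry: "\<And>i j. i < n \<Longrightarrow> j < m \<Longrightarrow> sub_poisson M (X i j) v"
    and abs_mean_entry: "\<And>i j. i < n \<Longrightarrow> j < m \<Longrightarrow> expectation (\<lambda>x. \<bar>X i j x\<bar>) \<le> v"
begin

definition column_weight :: "real \<Rightarrow> nat \<Rightarrow> nat \<Rightarrow> 'a \<Rightarrow> real" where
  "column_weight K i j x = exp (min \<bar>X i j x\<bar> K * (\<Sum>k\<in>{0..<n} - {i}. \<bar>X k j x\<bar>) / K)"

lemma column_weight_measurable [measurable]: "column_weight K i j \<in> borel_measurable M"
  unfolding column_weight_def by measurable

lemma indep_column:
  assumes "j < m" shows "indep_vars (\<lambda>_. borel) (\<lambda>k. X k j) {0..<n}"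
proof -
  have "indep_vars (\<lambda>_. borel) (\<lambda>(i, j). X i j) ((\<lambda>k. (k, j)) ` {0..<n})"
    by (rule indep_vars_subset[OF indep_entries]) (use assms in auto)
  from indep_vars_reindex[OF _ this] show ?thesis by (simp add: inj_on_def)
qed

lemma indep_column_weights:
  assumes "i < n" shows "indep_vars (\<lambda>_. borel) (column_weight K i) {..<m}"
proof -
  let ?block = "\<lambda>j. {0..<n} \<times> {j}"
  define G where "G j f = exp (min \<bar>f (i, j)\<bar> K * (\<Sum>k\<in>{0..<n} - {i}. \<bar>f (k, j)\<bar>) / K)"
    for j and f :: "nat \<times> nat \<Rightarrow> real"
  have "indep_vars (\<lambda>j. PiM (?block j) (\<lambda>_. borel))
      (\<lambda>j x. restrict (\<lambda>p. (\<lambda>(i, j). X i j) p x) (?block j)) {..<m}"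
    by (rule indep_vars_restrict[OF indep_entries]) (auto simp: disjoint_family_on_def)
  then have "indep_vars (\<lambda>_. borel) (\<lambda>j x. G j (restrict (\<lambda>p. (\<lambda>(i, j). X i j) p x) (?block j))) {..<m}"
    by (rule indep_vars_compose2) (use assms in \<open>unfold G_def, measurable\<close>)
  moreover have "G j (restrict (\<lambda>p. (\<lambda>(i, j). X i j) p x) (?block j)) = column_weight K i j x" for j x
    using assms by (auto simp: G_def column_weight_def intro!: sum.cong)
  ultimately show ?thesis by simp
qed

lemma offdiag_row_norm_measurable [measurable]:
  "(\<lambda>x. offdiag_row_norm n m (\<lambda>i j. X i j x) i) \<in> borel_measurable M"
  unfolding offdiag_row_norm_def by measurable

lemma integrable_entry: "i < n \<Longrightarrow> j < m \<Longrightarrow> integrable M (X i j)"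
  using sub_poisson_entry by (simp add: sub_poisson_def)

lemma variance_proxy_nonneg: "i < n \<Longrightarrow> j < m \<Longrightarrow> 0 \<le> v"
  using sub_poisson_entry by (simp add: sub_poisson_def)

lemma expectation_column_weight_le:
  assumes i: "i < n" and j: "j < m" and K: "0 < K"
  shows "integrable M (column_weight K i j)"
    and "expectation (column_weight K i j) \<le> 1 + v / K * (exp (3 * (exp 1 - 1) * n * v) - 1)"
proof -
  let ?Y = "\<lambda>x. min \<bar>X i j x\<bar> K"
  let ?P = "\<lambda>x. \<Prod>k\<in>{0..<n} - {i}. exp \<bar>X k j x\<bar>"
  let ?T = "\<Prod>k\<in>{0..<n} - {i}. expectation (\<lambda>x. exp \<bar>X k j x\<bar>)"
  have v: "0 \<le> v" using variance_proxy_nonneg[OF i j] .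
  have int_Y: "integrable M ?Y"
    by (rule Bochner_Integration.integrable_bound[OF integrable_entry[OF i j]])
       (use K in \<open>auto intro!: AE_I2\<close>)
  have mgf: "integrable M (\<lambda>x. exp \<bar>X k j x\<bar>)"
    "expectation (\<lambda>x. exp \<bar>X k j x\<bar>) \<le> exp (3 * v * (exp 1 - 1))" if "k < n" for k
    using sub_poisson_mgf_abs_le[OF sub_poisson_entry[OF that j] abs_mean_entry[OF that j], of 1]
    by simp_all
  have factor: "integrable M (\<lambda>x. ?Y x * ?P x)" "expectation (\<lambda>x. ?Y x * ?P x) = expectation ?Y * ?T"
    using indep_vars_integral_mult_prod[OF indep_column[OF j], of i "\<lambda>y. min \<bar>y\<bar> K" "\<lambda>y. exp \<bar>y\<bar>"]
      i int_Y mgf(1) by auto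
  define R where "R x = 1 + ?Y x / K * (?P x - 1)" for x
  have int_R: "integrable M R"
    unfolding R_def using factor(1) int_Y by (simp add: algebra_simps)
  have weight_le_R: "column_weight K i j x \<le> R x" for x
  proof -
    have "column_weight K i j x = exp (?Y x / K * (\<Sum>k\<in>{0..<n} - {i}. \<bar>X k j x\<bar>))"
      by (simp add: column_weight_def)
    also have "\<dots> \<le> 1 + ?Y x / K * (exp (\<Sum>k\<in>{0..<n} - {i}. \<bar>X k j x\<bar>) - 1)"
      by (rule exp_mult_le_convex) (use K in auto)
    finally show ?thesis by (simp add: R_def exp_sum)
  qed
  show int_weight: "integrable M (column_weight K i j)"
  proof (rule Bochner_Integration.integrable_bound[OF int_R])
    show "AE x in M. norm (column_weight K i j x) \<le> norm (R x)"
      using weight_le_R by (intro AE_I2) (simp add: column_weight_def order_trans[OF _ abs_ge_self])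
  qed simp
  have T_ge: "1 \<le> ?T"
  proof (rule prod_ge_1)
    fix k assume "k \<in> {0..<n} - {i}"
    then have "expectation (\<lambda>x. 1) \<le> expectation (\<lambda>x. exp \<bar>X k j x\<bar>)"
      using mgf(1) by (intro integral_mono) auto
    then show "1 \<le> expectation (\<lambda>x. exp \<bar>X k j x\<bar>)" by (simp add: prob_space)
  qed
  have "?T \<le> (\<Prod>k\<in>{0..<n} - {i}. exp (3 * v * (exp 1 - 1)))"
    by (rule prod_mono) (use mgf in \<open>auto intro!: integral_nonneg_AE\<close>)
  also have "\<dots> = exp (3 * v * (exp 1 - 1)) ^ (n - 1)"
    using i by simp
  also have "\<dots> = exp (real (n - 1) * (3 * v * (exp 1 - 1)))"
    by (rule exp_of_nat_mult[symmetric])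
  also have "\<dots> \<le> exp (real n * (3 * v * (exp 1 - 1)))"
    using v by (simp add: mult_right_mono)
  also have "\<dots> = exp (3 * (exp 1 - 1) * n * v)"
    by (simp add: algebra_simps)
  finally have T_le: "?T \<le> exp (3 * (exp 1 - 1) * n * v)" .
  have EY: "0 \<le> expectation ?Y" "expectation ?Y \<le> v"
    using integral_mono[OF int_Y integrable_abs[OF integrable_entry[OF i j]]] abs_mean_entry[OF i j] K
    by (auto intro!: integral_nonneg_AE)
  have "expectation (column_weight K i j) \<le> expectation R"
    by (rule integral_mono[OF int_weight int_R weight_le_R])
  also have "expectation R = 1 + expectation ?Y / K * (?T - 1)"
    unfolding R_def using factor int_Y by (simp add: prob_space algebra_simps)
  also have "\<dots> \<le> 1 + v / K * (exp (3 * (exp 1 - 1) * n * v) - 1)"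
    using EY T_ge T_le K v by (auto intro!: mult_mono divide_right_mono)
  finally show "expectation (column_weight K i j) \<le> 1 + v / K * (exp (3 * (exp 1 - 1) * n * v) - 1)" .
qed

lemma prob_entry_in_row_gt:
  assumes i: "i < n" and l: "0 \<le> l"
  shows "prob {x \<in> space M. \<exists>j<m. K < \<bar>X i j x\<bar>} \<le> m * (exp (3 * v * (exp l - 1)) / exp (l * K))"
proof -
  have "prob {x \<in> space M. \<exists>j<m. K < \<bar>X i j x\<bar>} \<le> prob (\<Union>j<m. {x \<in> space M. K \<le> \<bar>X i j x\<bar>})"
    by (rule finite_measure_mono) auto
  also have "\<dots> \<le> (\<Sum>j<m. prob {x \<in> space M. K \<le> \<bar>X i j x\<bar>})"
    by (rule finite_measure_subadditive_finite) auto
  also have "\<dots> \<le> (\<Sum>j<m. exp (3 * v * (exp l - 1)) / exp (l * K))"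
    using sub_poisson_abs_tail[OF sub_poisson_entry[OF i] abs_mean_entry[OF i] l]
    by (intro sum_mono) simp
  finally show ?thesis by simp
qed

lemma prob_prod_column_weights_ge:
  assumes i: "i < n" and K: "0 < K"
  shows "prob {x \<in> space M. exp (a / K) \<le> (\<Prod>j<m. column_weight K i j x)}
         \<le> exp ((m * v * (exp (3 * (exp 1 - 1) * n * v) - 1) - a) / K)"
proof -
  let ?c = "v / K * (exp (3 * (exp 1 - 1) * n * v) - 1)"
  note weight = expectation_column_weight_le[OF i _ K]
  have int: "integrable M (\<lambda>x. \<Prod>j<m. column_weight K i j x)"
    using indep_vars_integrable[OF _ indep_column_weights[OF i]] weight(1) by simp
  have "prob {x \<in> space M. exp (a / K) \<le> (\<Prod>j<m. column_weight K i j x)}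
      \<le> expectation (\<lambda>x. \<Prod>j<m. column_weight K i j x) / exp (a / K)"
    by (rule integral_Markov_inequality_measure[OF int])
       (auto intro!: AE_I2 prod_nonneg simp: column_weight_def)
  also have "\<dots> = (\<Prod>j<m. expectation (column_weight K i j)) / exp (a / K)"
    using indep_vars_lebesgue_integral[OF _ indep_column_weights[OF i]] weight(1) by simp
  also have "\<dots> \<le> (\<Prod>j<m. exp ?c) / exp (a / K)"
    using order_trans[OF weight(2) exp_ge_add_one_self]
    by (intro divide_right_mono prod_mono conjI integral_nonneg_AE AE_I2)
       (auto simp: column_weight_def)
  also have "\<dots> = exp ((m * v * (exp (3 * (exp 1 - 1) * n * v) - 1) - a) / K)"
    by (simp add: exp_of_nat_mult[symmetric] exp_diff[symmetric] diff_divide_distrib)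
  finally show ?thesis .
qed

lemma prod_column_weights_eq:
  assumes K: "0 < K" and small: "\<And>j. j < m \<Longrightarrow> \<bar>X i j x\<bar> \<le> K"
  shows "(\<Prod>j<m. column_weight K i j x) = exp (offdiag_row_norm n m (\<lambda>i j. X i j x) i / K)"
  using small unfolding offdiag_row_norm_eq column_weight_def
  by (simp add: exp_sum sum_divide_distrib min_absorb1)

lemma prob_offdiag_row_norm_gt:
  assumes i: "i < n" and K: "0 < K" and l: "0 \<le> l"
  shows "prob {x \<in> space M. a < offdiag_row_norm n m (\<lambda>i j. X i j x) i}
         \<le> m * (exp (3 * v * (exp l - 1)) / exp (l * K))
           + exp ((m * v * (exp (3 * (exp 1 - 1) * n * v) - 1) - a) / K)"
proof -
  let ?large_entry = "{x \<in> space M. \<exists>j<m. K < \<bar>X i j x\<bar>}"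
  let ?large_weight = "{x \<in> space M. exp (a / K) \<le> (\<Prod>j<m. column_weight K i j x)}"
  have "x \<in> ?large_entry \<union> ?large_weight"
    if x: "x \<in> space M" and gt: "a < offdiag_row_norm n m (\<lambda>i j. X i j x) i" for x
  proof (cases "\<forall>j<m. \<bar>X i j x\<bar> \<le> K")
    case True
    have "exp (a / K) \<le> exp (offdiag_row_norm n m (\<lambda>i j. X i j x) i / K)"
      using gt K by (simp add: divide_right_mono)
    then show ?thesis using prod_column_weights_eq[OF K, of i x] True x by simp
  qed (use x in \<open>auto simp: not_le\<close>)
  then have "{x \<in> space M. a < offdiag_row_norm n m (\<lambda>i j. X i j x) i} \<subseteq> ?large_entry \<union> ?large_weight"
    by blast
  then have "prob {x \<in> space M. a < offdiag_row_norm n m (\<lambda>i j. X i j x) i}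
      \<le> prob ?large_entry + prob ?large_weight"
    by (intro order_trans[OF finite_measure_mono measure_Un_le]) auto
  then show ?thesis
    using prob_entry_in_row_gt[OF i l, of K] prob_prod_column_weights_ge[OF i K, of a] by linarith
qed

lemma prob_offdiag_row_norm_gt_bound:
  fixes t :: real
  assumes i: "i < n" and v: "0 < v" and m: "1 \<le> m" and small: "6 * (exp 1)\<^sup>2 * n * v \<le> 1"
    and t: "6 \<le> t" and ratio: "96 * (ln m)\<^sup>2 / (ln (1 / (6 * exp 1 * n * v)))\<^sup>2 \<le> t"
  shows "prob {x \<in> space M. (4 + 5 * t) * n * m * v\<^sup>2 < offdiag_row_norm n m (\<lambda>i j. X i j x) i}
         \<le> sqrt t * exp (- (sqrt t * n * m * v\<^sup>2 / (10 * sqrt 6))) + 3 * n powr (- (sqrt t / (2 * sqrt 6)))"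
proof -
  define K where "K = sqrt t / (2 * sqrt 6)"
  define l where "l = ln (1 / (6 * exp 1 * v))"
  have n: "1 \<le> n" and K: "0 < K" using i t unfolding K_def by auto
  have "6 * exp 1 * n * v < 6 * (exp 1)\<^sup>2 * n * v"
    using n v by (simp add: power2_eq_square)
  then have "6 * exp 1 * n * v < 1"
    using small by linarith
  then have "0 < ln (1 / (6 * exp 1 * n * v))"
    using n v by simp
  from le_of_sq_ratio_le[OF this ratio]
  have lnm: "ln m \<le> K * ln (1 / (6 * exp 1 * n * v))"
    unfolding K_def .
  note entry = entry_tail_bound_le[OF v n m less_imp_le[OF \<open>6 * exp 1 * n * v < 1\<close>] lnm, folded l_def]
  have "prob {x \<in> space M. (4 + 5 * t) * n * m * v\<^sup>2 < offdiag_row_norm n m (\<lambda>i j. X i j x) i}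
      \<le> m * (exp (3 * v * (exp l - 1)) / exp (l * K))
        + exp ((m * v * (exp (3 * (exp 1 - 1) * n * v) - 1) - (4 + 5 * t) * n * m * v\<^sup>2) / K)"
    by (rule prob_offdiag_row_norm_gt[OF i K entry(1)])
  also have "\<dots> \<le> 3 * n powr (- K) + exp (- (sqrt t * n * m * v\<^sup>2 / (10 * sqrt 6)))"
    using entry(2) column_exponent_le[OF less_imp_le[OF v] small t, of m] i
    unfolding K_def by (intro add_mono) auto
  also have "\<dots> \<le> 3 * n powr (- K) + sqrt t * exp (- (sqrt t * n * m * v\<^sup>2 / (10 * sqrt 6)))"
    using t by (simp add: mult_le_cancel_right1)
  finally show ?thesis unfolding K_def by simp
qed

end

text \<open>The locale requires every entry to be measurable, not only those in range; padding by 0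
  provides this.\<close>

lemma (in prob_space) sub_poisson_matrix_padded:
  assumes indep: "indep_vars (\<lambda>_. borel) (\<lambda>(i, j). X i j) ({0..<n} \<times> {0..<m})"
    and "\<And>i j. i < n \<Longrightarrow> j < m \<Longrightarrow> sub_poisson M (X i j) v"
    and "\<And>i j. i < n \<Longrightarrow> j < m \<Longrightarrow> expectation (\<lambda>x. \<bar>X i j x\<bar>) \<le> v"
  shows "sub_poisson_matrix M (\<lambda>i j. if i < n \<and> j < m then X i j else (\<lambda>_. 0)) n m v"
proof (intro sub_poisson_matrix.intro sub_poisson_matrix_axioms.intro)
  show "indep_vars (\<lambda>_. borel) (\<lambda>(i, j). if i < n \<and> j < m then X i j else (\<lambda>_. 0)) ({0..<n} \<times> {0..<m})"
    using indep by (subst indep_vars_cong) auto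
qed (use assms prob_space_axioms in \<open>auto simp: indep_vars_def\<close>)

theorem lemma6p5:
  fixes M :: "'a measure" and X :: "nat \<Rightarrow> nat \<Rightarrow> 'a \<Rightarrow> real"
    and n m :: nat and sigma2 s t :: real
  assumes "prob_space M"
    and "1 \<le> n" and "n \<le> m"
    and "prob_space.indep_vars M (\<lambda>_. borel) (\<lambda>(i, j). X i j) ({0..<n} \<times> {0..<m})"
    and "\<And>i j x. i < n \<Longrightarrow> j < m \<Longrightarrow> x \<in> space M \<Longrightarrow> X i j x \<in> \<int>"
    and "\<And>i j. i < n \<Longrightarrow> j < m \<Longrightarrow> sub_poisson M (X i j) sigma2"
    and "\<And>i j. i < n \<Longrightarrow> j < m \<Longrightarrow> integral\<^sup>L M (\<lambda>x. \<bar>X i j x\<bar>) \<le> sigma2"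
    and "8 * ln (exp 1 * real n) \<le> real m * sigma2"
    and "6 * (exp 1)\<^sup>2 * real n * sigma2 \<le> 1"
    and "s > 0"
    and "t \<ge> max 6 (96 * (ln (real m))\<^sup>2 / (ln (1 / (6 * exp 1 * real n * sigma2)))\<^sup>2)"
  shows "measure M {x \<in> space M.
           (1 / real n) * (\<Sum>i<n. if offdiag_row_norm n m (\<lambda>i j. X i j x) i
                                        \<le> (4 + 5 * t) * real n * real m * sigma2\<^sup>2
                                   then 1 else 0) \<le> 1 - s}
         \<le> (1 / s) * (sqrt t * exp (- (sqrt t * real n * real m * sigma2\<^sup>2 / (10 * sqrt 6)))
                      + 3 * real n powr (- (sqrt t / (2 * sqrt 6))))"
proof -
  interpret prob_space M by fact
  have n: "1 \<le> n" and m: "1 \<le> m" and t: "6 \<le> t" using assms(2,3,11) by auto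
  have "1 \<le> ln (exp 1 * real n)" using n by (simp add: ln_mult)
  then have "0 < real m * sigma2" using assms(8) by linarith
  then have v: "0 < sigma2" by (simp add: zero_less_mult_iff)
  define Y where "Y = (\<lambda>i j. if i < n \<and> j < m then X i j else (\<lambda>_. 0 :: real))"
  interpret Y: sub_poisson_matrix M Y n m sigma2
    unfolding Y_def using sub_poisson_matrix_padded assms(4,6,7) by blast
  have row_eq: "offdiag_row_norm n m (\<lambda>i j. Y i j x) i = offdiag_row_norm n m (\<lambda>i j. X i j x) i"
    if "i < n" for i x
    using that by (rule offdiag_row_norm_cong) (simp add: Y_def)
  have events: "{x \<in> space M. \<not> offdiag_row_norm n m (\<lambda>i j. X i j x) i \<le> a} \<in> events"
    if "i < n" for i a
  proof -
    have "{x \<in> space M. \<not> offdiag_row_norm n m (\<lambda>i j. Y i j x) i \<le> a} \<in> events"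
      by measurable
    then show ?thesis using row_eq[OF that] by simp
  qed
  show ?thesis
    by (rule prob_fraction_le_one_minus[OF n assms(10) events])
       (use row_eq Y.prob_offdiag_row_norm_gt_bound[OF _ v m assms(9) t] assms(11)
         in \<open>auto simp: not_le\<close>)
qed

end
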